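(* Let $K$ be a field and $f\colon R\to S$ a morphism of Zinbiel algebras. If $H^2_{\mathrm{Zinb}}(f,f)=0$, then $f$ is rigid.
   Context: A Zinbiel algebra over $K$ is a $K$-vector space $R$ with bilinear product $x\cdot y$ (also written $m_R(x,y)$) satisfying $(x\cdot y)\cdot z=x\cdot(y\cdot z)+x\cdot(z\cdot y)$. A morphism $f\colon R\to S$ is a linear map with $f(x\cdot y)=f(x)\cdot f(y)$. $R$ is a bimodule over itself, $S$ over itself, and $S$ is an $R$-bimodule via $r\cdot s=f(r)\cdot s$, $s\cdot r=s\cdot f(r)$. For a bimodule $A$ over $R$ and $1\le n\le4$, $C^n_{\mathrm{Zinb}}(R,A)=\mathrm{Hom}_K(R^{\otimes n},A)$ with $(d^1\varphi)(x,y)=x\cdot\varphi(y)-\varphi(x\cdot y)+\varphi(x)\cdot y$, $(d^2\varphi)(x,y,z)=x\cdot(\varphi(y,z)+\varphi(z,y))-\varphi(x\cdot y,z)+\varphi(x,y\cdot z+z\cdot y)-\varphi(x,y)\cdot z$, $(d^3\varphi)(x,y,z,w)=x\cdot\{\varphi(y,z,w)-\varphi(z,w,y)+\varphi(z,y,w)-\varphi(w,z,y)\}-\varphi(x\cdot y,z,w)+\varphi(x,y\cdot z+z\cdot y,w)-\varphi(x,y,z\cdot w+w\cdot z)+\varphi(x,y,z)\cdot w$. The deformation complex: $C^0_{\mathrm{Zinb}}(R,S)=0$, $d^0=0$, $C^n_{\mathrm{Zinb}}(f,f)=C^n_{\mathrm{Zinb}}(R,R)\times C^n_{\mathrm{Zinb}}(S,S)\times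 C^{n-1}_{\mathrm{Zinb}}(R,S)$ ($1\le n\le4$), $d^i_f(\xi;\pi;\varphi)=(d^i\xi;d^i\pi;f\xi-\pi f-d^{i-1}\varphi)$ with $(f\xi)(x_1,\dots)=f(\xi(x_1,\dots))$, $(\pi f)(x_1,\dots)=\pi(f(x_1),\dots)$. $H^2_{\mathrm{Zinb}}(f,f)=\ker d^2_f/\operatorname{im} d^1_f$. A deformation of $f$ is a formal power series $\Theta_t=\sum_{i\ge0}\theta_it^i$ with $\theta_0=(m_R;m_S;f)$ and $\theta_i=(m_{R,i};m_{S,i};f_i)\in C^2_{\mathrm{Zinb}}(f,f)$, such that for $*=R,S$ the bilinear map $M_{*,t}=\sum_i m_{*,i}t^i$ satisfies $M_{*,t}(M_{*,t}(x,y),z)=M_{*,t}(x,M_{*,t}(y,z))+M_{*,t}(x,M_{*,t}(z,y))$, and $F_t=\sum_if_it^i$ satisfies $F_t(M_{R,t}(x,y))=M_{S,t}(F_t(x),F_t(y))$. A formal isomorphism of $f$ is $\Phi_t=(\Phi_{R,t};\Phi_{S,t})=\sum_{i\ge0}(\phi_{R,i};\phi_{S,i})t^i$ with $(\phi_{R,0};\phi_{S,0})=(\mathrm{Id}_R;\mathrm{Id}_S)$ and $\phi_{R,i}\in\mathrm{Hom}_K(R,R)$, $\phi_{S,i}\in\mathrm{Hom}_K(S,S)$. Deformations $\Theta_t=(M_{R,t};M_{S,t};F_t)$ and $\overline{\Theta}_t=(\overline{M}_{R,t};\overline{M}_{S,t};\overline{F}_t)$ are equivalent if for some formal isomorphism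 $\Phi_t$: $\overline{M}_{R,t}=\Phi_{R,t}M_{R,t}\Phi_{R,t}^{-1}$ (meaning $(x,y)\mapsto\Phi_{R,t}(M_{R,t}(\Phi_{R,t}^{-1}x,\Phi_{R,t}^{-1}y))$), likewise for $S$, and $\overline{F}_t=\Phi_{S,t}F_t\Phi_{R,t}^{-1}$. The trivial deformation is $\Theta_t=\theta_0=(m_R;m_S;f)$. The morphism $f$ is rigid if every deformation of $f$ is equivalent to the trivial deformation. *)

theory Defs
  imports Complex_Main
begin

text \<open>K-vector spaces are types with a scalar multiplication by a field 'k
  (locale vector_space); K-linear maps are Vector_Spaces.linear.
  Hom_K(R (x) R, A) is represented by K-bilinear maps R => R => A.\<close>

definition bilin ::
  "('k::field \<Rightarrow> 'a::ab_group_add \<Rightarrow> 'a) \<Rightarrow> ('k \<Rightarrow> 'b::ab_group_add \<Rightarrow> 'b) \<Rightarrow>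
   ('k \<Rightarrow> 'c::ab_group_add \<Rightarrow> 'c) \<Rightarrow> ('a \<Rightarrow> 'b \<Rightarrow> 'c) \<Rightarrow> bool" where
  "bilin s1 s2 s3 g \<longleftrightarrow>
     (\<forall>x. Vector_Spaces.linear s2 s3 (g x)) \<and> (\<forall>y. Vector_Spaces.linear s1 s3 (\<lambda>x. g x y))"

definition zinbiel :: "('k::field \<Rightarrow> 'r::ab_group_add \<Rightarrow> 'r) \<Rightarrow> ('r \<Rightarrow> 'r \<Rightarrow> 'r) \<Rightarrow> bool" where
  "zinbiel s m \<longleftrightarrow> vector_space s \<and> bilin s s s m \<and>
     (\<forall>x y z. m (m x y) z = m x (m y z) + m x (m z y))"

definition zinb_morphism ::
  "('k::field \<Rightarrow> 'r::ab_group_add \<Rightarrow> 'r) \<Rightarrow> ('r \<Rightarrow> 'r \<Rightarrow> 'r) \<Rightarrow>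
   ('k \<Rightarrow> 's::ab_group_add \<Rightarrow> 's) \<Rightarrow> ('s \<Rightarrow> 's \<Rightarrow> 's) \<Rightarrow> ('r \<Rightarrow> 's) \<Rightarrow> bool" where
  "zinb_morphism sR mR sS mS f \<longleftrightarrow> zinbiel sR mR \<and> zinbiel sS mS \<and>
     Vector_Spaces.linear sR sS f \<and> (\<forall>x y. f (mR x y) = mS (f x) (f y))"

text \<open>Zinbiel coboundaries with values in a bimodule A given by left action l and right action r.\<close>

definition zd1 :: "('r \<Rightarrow> 'r \<Rightarrow> 'r) \<Rightarrow> ('r \<Rightarrow> 'a \<Rightarrow> 'a) \<Rightarrow> ('a \<Rightarrow> 'r \<Rightarrow> 'a) \<Rightarrow>
    ('r \<Rightarrow> 'a::ab_group_add) \<Rightarrow> 'r \<Rightarrow> 'r \<Rightarrow> 'a" where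
  "zd1 m l r \<phi> = (\<lambda>x y. l x (\<phi> y) - \<phi> (m x y) + r (\<phi> x) y)"

definition zd2 :: "('r \<Rightarrow> 'r \<Rightarrow> 'r::ab_group_add) \<Rightarrow> ('r \<Rightarrow> 'a \<Rightarrow> 'a) \<Rightarrow> ('a \<Rightarrow> 'r \<Rightarrow> 'a) \<Rightarrow>
    ('r \<Rightarrow> 'r \<Rightarrow> 'a::ab_group_add) \<Rightarrow> 'r \<Rightarrow> 'r \<Rightarrow> 'r \<Rightarrow> 'a" where
  "zd2 m l r \<phi> = (\<lambda>x y z. l x (\<phi> y z + \<phi> z y) - \<phi> (m x y) z
                        + \<phi> x (m y z + m z y) - r (\<phi> x y) z)"

text \<open>Deformation complex of f. C^1(f,f) = C^1(R,R) x C^1(S,S) x C^0(R,S) with C^0(R,S) = 0,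
  so its elements are represented by pairs (xi, pi).\<close>

definition d1_f :: "('r \<Rightarrow> 'r \<Rightarrow> 'r::ab_group_add) \<Rightarrow> ('s \<Rightarrow> 's \<Rightarrow> 's::ab_group_add) \<Rightarrow> ('r \<Rightarrow> 's) \<Rightarrow>
    ('r \<Rightarrow> 'r) \<times> ('s \<Rightarrow> 's) \<Rightarrow>
    ('r \<Rightarrow> 'r \<Rightarrow> 'r) \<times> ('s \<Rightarrow> 's \<Rightarrow> 's) \<times> ('r \<Rightarrow> 's)" where
  "d1_f mR mS f = (\<lambda>(\<xi>, \<pi>). (zd1 mR mR mR \<xi>, zd1 mS mS mS \<pi>, (\<lambda>x. f (\<xi> x) - \<pi> (f x))))"

definition d2_f :: "('r \<Rightarrow> 'r \<Rightarrow> 'r::ab_group_add) \<Rightarrow> ('s \<Rightarrow> 's \<Rightarrow> 's::ab_group_add) \<Rightarrow> ('r \<Rightarrow> 's) \<Rightarrow>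
    ('r \<Rightarrow> 'r \<Rightarrow> 'r) \<times> ('s \<Rightarrow> 's \<Rightarrow> 's) \<times> ('r \<Rightarrow> 's) \<Rightarrow>
    ('r \<Rightarrow> 'r \<Rightarrow> 'r \<Rightarrow> 'r) \<times> ('s \<Rightarrow> 's \<Rightarrow> 's \<Rightarrow> 's) \<times> ('r \<Rightarrow> 'r \<Rightarrow> 's)" where
  "d2_f mR mS f = (\<lambda>(\<xi>, \<pi>, \<phi>). (zd2 mR mR mR \<xi>, zd2 mS mS mS \<pi>,
      (\<lambda>x y. f (\<xi> x y) - \<pi> (f x) (f y)
             - zd1 mR (\<lambda>x s. mS (f x) s) (\<lambda>s x. mS s (f x)) \<phi> x y)))"

definition C1_f :: "('k::field \<Rightarrow> 'r::ab_group_add \<Rightarrow> 'r) \<Rightarrow> ('k \<Rightarrow> 's::ab_group_add \<Rightarrow> 's) \<Rightarrow>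
    (('r \<Rightarrow> 'r) \<times> ('s \<Rightarrow> 's)) set" where
  "C1_f sR sS = {(\<xi>, \<pi>). Vector_Spaces.linear sR sR \<xi> \<and> Vector_Spaces.linear sS sS \<pi>}"

definition C2_f :: "('k::field \<Rightarrow> 'r::ab_group_add \<Rightarrow> 'r) \<Rightarrow> ('k \<Rightarrow> 's::ab_group_add \<Rightarrow> 's) \<Rightarrow>
    (('r \<Rightarrow> 'r \<Rightarrow> 'r) \<times> ('s \<Rightarrow> 's \<Rightarrow> 's) \<times> ('r \<Rightarrow> 's)) set" where
  "C2_f sR sS = {(\<xi>, \<pi>, \<phi>). bilin sR sR sR \<xi> \<and> bilin sS sS sS \<pi> \<and> Vector_Spaces.linear sR sS \<phi>}"

definition H2_f_zero :: "('k::field \<Rightarrow> 'r::ab_group_add \<Rightarrow> 'r) \<Rightarrow> ('r \<Rightarrow> 'r \<Rightarrow> 'r) \<Rightarrow>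
   ('k \<Rightarrow> 's::ab_group_add \<Rightarrow> 's) \<Rightarrow> ('s \<Rightarrow> 's \<Rightarrow> 's) \<Rightarrow> ('r \<Rightarrow> 's) \<Rightarrow> bool" where
  "H2_f_zero sR mR sS mS f \<longleftrightarrow>
     (\<forall>c \<in> C2_f sR sS. d2_f mR mS f c = (\<lambda>x y z. 0, \<lambda>x y z. 0, \<lambda>x y. 0) \<longrightarrow>
        (\<exists>b \<in> C1_f sR sS. d1_f mR mS f b = c))"

text \<open>Deformations: formal power series given by their coefficient sequences; the
  power series identities are required coefficientwise (coefficient of t^n).\<close>

definition is_deformation ::
  "('k::field \<Rightarrow> 'r::ab_group_add \<Rightarrow> 'r) \<Rightarrow> ('r \<Rightarrow> 'r \<Rightarrow> 'r) \<Rightarrow>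
   ('k \<Rightarrow> 's::ab_group_add \<Rightarrow> 's) \<Rightarrow> ('s \<Rightarrow> 's \<Rightarrow> 's) \<Rightarrow> ('r \<Rightarrow> 's) \<Rightarrow>
   (nat \<Rightarrow> 'r \<Rightarrow> 'r \<Rightarrow> 'r) \<Rightarrow> (nat \<Rightarrow> 's \<Rightarrow> 's \<Rightarrow> 's) \<Rightarrow> (nat \<Rightarrow> 'r \<Rightarrow> 's) \<Rightarrow> bool" where
  "is_deformation sR mR sS mS f MR MS F \<longleftrightarrow>
     MR 0 = mR \<and> MS 0 = mS \<and> F 0 = f \<and>
     (\<forall>i. (MR i, MS i, F i) \<in> C2_f sR sS) \<and>
     (\<forall>n x y z. (\<Sum>i\<le>n. MR i (MR (n - i) x y) z)
               = (\<Sum>i\<le>n. MR i x (MR (n - i) y z) + MR i x (MR (n - i) z y))) \<and>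
     (\<forall>n x y z. (\<Sum>i\<le>n. MS i (MS (n - i) x y) z)
               = (\<Sum>i\<le>n. MS i x (MS (n - i) y z) + MS i x (MS (n - i) z y))) \<and>
     (\<forall>n x y. (\<Sum>i\<le>n. F i (MR (n - i) x y))
             = (\<Sum>i\<le>n. \<Sum>j\<le>n - i. MS i (F j x) (F (n - i - j) y)))"

definition formal_iso :: "('k::field \<Rightarrow> 'a::ab_group_add \<Rightarrow> 'a) \<Rightarrow> (nat \<Rightarrow> 'a \<Rightarrow> 'a) \<Rightarrow> bool" where
  "formal_iso s \<Phi> \<longleftrightarrow> \<Phi> 0 = id \<and> (\<forall>i. Vector_Spaces.linear s s (\<Phi> i))"

definition fps_inverse_of :: "(nat \<Rightarrow> 'a \<Rightarrow> 'a::ab_group_add) \<Rightarrow> (nat \<Rightarrow> 'a \<Rightarrow> 'a) \<Rightarrow> bool" where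
  "fps_inverse_of \<Psi> \<Phi> \<longleftrightarrow>
     (\<forall>n x. (\<Sum>i\<le>n. \<Phi> i (\<Psi> (n - i) x)) = (if n = 0 then x else 0)) \<and>
     (\<forall>n x. (\<Sum>i\<le>n. \<Psi> i (\<Phi> (n - i) x)) = (if n = 0 then x else 0))"

text \<open>Equivalence: \<Theta>bar = \<Phi> \<Theta> \<Phi>^{-1}, coefficientwise.\<close>

definition equiv_deformations ::
  "('k::field \<Rightarrow> 'r::ab_group_add \<Rightarrow> 'r) \<Rightarrow> ('k \<Rightarrow> 's::ab_group_add \<Rightarrow> 's) \<Rightarrow>
   (nat \<Rightarrow> 'r \<Rightarrow> 'r \<Rightarrow> 'r) \<Rightarrow> (nat \<Rightarrow> 's \<Rightarrow> 's \<Rightarrow> 's) \<Rightarrow> (nat \<Rightarrow> 'r \<Rightarrow> 's) \<Rightarrow>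
   (nat \<Rightarrow> 'r \<Rightarrow> 'r \<Rightarrow> 'r) \<Rightarrow> (nat \<Rightarrow> 's \<Rightarrow> 's \<Rightarrow> 's) \<Rightarrow> (nat \<Rightarrow> 'r \<Rightarrow> 's) \<Rightarrow> bool" where
  "equiv_deformations sR sS MR MS F MR' MS' F' \<longleftrightarrow>
     (\<exists>\<Phi>R \<Phi>S \<Psi>R \<Psi>S. formal_iso sR \<Phi>R \<and> formal_iso sS \<Phi>S \<and>
        fps_inverse_of \<Psi>R \<Phi>R \<and> fps_inverse_of \<Psi>S \<Phi>S \<and>
        (\<forall>n x y. MR' n x y = (\<Sum>i\<le>n. \<Sum>j\<le>n - i. \<Sum>k\<le>n - i - j.
             \<Phi>R i (MR j (\<Psi>R k x) (\<Psi>R (n - i - j - k) y)))) \<and>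
        (\<forall>n x y. MS' n x y = (\<Sum>i\<le>n. \<Sum>j\<le>n - i. \<Sum>k\<le>n - i - j.
             \<Phi>S i (MS j (\<Psi>S k x) (\<Psi>S (n - i - j - k) y)))) \<and>
        (\<forall>n x. F' n x = (\<Sum>i\<le>n. \<Sum>j\<le>n - i. \<Phi>S i (F j (\<Psi>R (n - i - j) x)))))"

definition rigid ::
  "('k::field \<Rightarrow> 'r::ab_group_add \<Rightarrow> 'r) \<Rightarrow> ('r \<Rightarrow> 'r \<Rightarrow> 'r) \<Rightarrow>
   ('k \<Rightarrow> 's::ab_group_add \<Rightarrow> 's) \<Rightarrow> ('s \<Rightarrow> 's \<Rightarrow> 's) \<Rightarrow> ('r \<Rightarrow> 's) \<Rightarrow> bool" where
  "rigid sR mR sS mS f \<longleftrightarrow>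
     (\<forall>MR MS F. is_deformation sR mR sS mS f MR MS F \<longrightarrow>
        equiv_deformations sR sS MR MS F
          (\<lambda>i. if i = 0 then mR else (\<lambda>x y. 0))
          (\<lambda>i. if i = 0 then mS else (\<lambda>x y. 0))
          (\<lambda>i. if i = 0 then f else (\<lambda>x. 0)))"

end

theory Submission
  imports Defs
begin

text \<open>Given a deformation \<open>(M\<^sub>R, M\<^sub>S, F)\<close> of \<open>f\<close>, we build formal isomorphisms
  \<open>P\<^sub>t = id + P\<^sub>1 t + \<dots>\<close> of \<open>R\<close> and \<open>Q\<^sub>t\<close> of \<open>S\<close> carrying the trivial deformation onto it,
  one degree at a time. If \<open>P\<^sub>t\<close> and \<open>Q\<^sub>t\<close> are compatible with the products and with
  \<open>F\<^sub>t\<close> below degree \<open>N\<close>, then the three defects in degree \<open>N\<close> form a 2-cocycle of the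
  deformation complex of \<open>f\<close>, because \<open>M\<^sub>R\<close>, \<open>M\<^sub>S\<close> satisfy the Zinbiel identity and \<open>F\<^sub>t\<close> is
  multiplicative as power series. Since \<open>H\<^sup>2(f, f) = 0\<close> it is a coboundary \<open>d\<^sup>1(b\<^sub>R, b\<^sub>S)\<close>, and
  subtracting \<open>b\<^sub>R\<close>, \<open>b\<^sub>S\<close> from \<open>P\<^sub>N\<close>, \<open>Q\<^sub>N\<close> removes the defect without touching lower
  degrees. The compositional inverses of the limits \<open>P\<^sub>t\<close>, \<open>Q\<^sub>t\<close> conjugate the deformation
  into the trivial one.\<close>

section \<open>Coefficients of products of power series\<close>

lemma sum_eq_single:
  assumes "finite A" "a \<in> A" "\<And>x. x \<in> A \<Longrightarrow> x \<noteq> a \<Longrightarrow> g x = 0"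
  shows "sum g A = g a"
  using sum.mono_neutral_right[of A "{a}" g] assms by auto

definition seq_shift :: "(nat \<Rightarrow> 'a::zero) \<Rightarrow> nat \<Rightarrow> 'a" where
  "seq_shift u k = (case k of 0 \<Rightarrow> 0 | Suc j \<Rightarrow> u j)"

definition seq_const :: "'a::zero \<Rightarrow> nat \<Rightarrow> 'a" where
  "seq_const x k = (if k = 0 then x else 0)"

lemma seq_split: "(u :: nat \<Rightarrow> 'a::monoid_add) = (\<lambda>k. seq_const (u 0) k + seq_shift (\<lambda>j. u (Suc j)) k)"
  by (rule ext) (auto simp: seq_const_def seq_shift_def split: nat.split)

lemma seq_shift_eq_0: "(\<And>m. m < n \<Longrightarrow> u m = 0) \<Longrightarrow> seq_shift u n = 0"
  by (auto simp: seq_shift_def split: nat.split)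

lemma additive_vanishing_on_shifts:
  fixes \<Phi> :: "(nat \<Rightarrow> 'a::monoid_add) \<Rightarrow> 'b::monoid_add"
  assumes add: "\<And>u u'. \<Phi> (\<lambda>k. u k + u' k) = \<Phi> u + \<Phi> u'"
    and shift: "\<And>u. \<Phi> (seq_shift u) = 0"
  shows "\<Phi> u = \<Phi> (seq_const (u 0))"
proof -
  have "\<Phi> u = \<Phi> (\<lambda>k. seq_const (u 0) k + seq_shift (\<lambda>j. u (Suc j)) k)"
    by (rule arg_cong[where f = \<Phi>, OF seq_split])
  also have "\<dots> = \<Phi> (seq_const (u 0))"
    by (simp only: add shift) simp
  finally show ?thesis .
qed

definition additive_seq :: "(nat \<Rightarrow> 'a::ab_group_add \<Rightarrow> 'b::ab_group_add) \<Rightarrow> bool" where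
  "additive_seq L \<longleftrightarrow> (\<forall>j. additive (L j))"

definition biadditive_seq :: "(nat \<Rightarrow> 'a::ab_group_add \<Rightarrow> 'b::ab_group_add \<Rightarrow> 'c::ab_group_add) \<Rightarrow> bool" where
  "biadditive_seq B \<longleftrightarrow> (\<forall>j x. additive (B j x)) \<and> (\<forall>j y. additive (\<lambda>x. B j x y))"

lemma additive_seqD:
  assumes "additive_seq L"
  shows "L j (x + y) = L j x + L j y" "L j 0 = 0" "L j (x - y) = L j x - L j y"
    "L j (- x) = - L j x" "L j (sum g A) = (\<Sum>a\<in>A. L j (g a))"
  using assms unfolding additive_seq_def
  by (simp_all add: additive.add additive.zero additive.diff additive.minus additive.sum)

lemma biadditive_seqD:
  assumes "biadditive_seq B"
  shows "B j (x + x') y = B j x y + B j x' y" "B j x (y + y') = B j x y + B j x y'"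
    "B j 0 y = 0" "B j x 0 = 0"
    "B j (x - x') y = B j x y - B j x' y" "B j x (y - y') = B j x y - B j x y'"
    "B j (- x) y = - B j x y" "B j x (- y) = - B j x y"
  using assms unfolding biadditive_seq_def
  by (simp_all add: additive.add additive.zero additive.diff additive.minus
      additive.add[where f = "\<lambda>x. B j x y"] additive.zero[where f = "\<lambda>x. B j x y"]
      additive.diff[where f = "\<lambda>x. B j x y"] additive.minus[where f = "\<lambda>x. B j x y"])

text \<open>For series \<open>L\<^sub>t = \<Sum> L\<^sub>i t\<^sup>i\<close> of (bi)additive maps, \<open>lconv L u n\<close> and
  \<open>bconv B u v n\<close> are the coefficients of \<open>t\<^sup>n\<close> in \<open>L\<^sub>t(u\<^sub>t)\<close> and \<open>B\<^sub>t(u\<^sub>t, v\<^sub>t)\<close>.\<close>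

definition lconv :: "(nat \<Rightarrow> 'a \<Rightarrow> 'b::comm_monoid_add) \<Rightarrow> (nat \<Rightarrow> 'a) \<Rightarrow> nat \<Rightarrow> 'b" where
  "lconv L u n = (\<Sum>i\<le>n. L i (u (n - i)))"

definition bconv ::
  "(nat \<Rightarrow> 'a \<Rightarrow> 'b \<Rightarrow> 'c::comm_monoid_add) \<Rightarrow> (nat \<Rightarrow> 'a) \<Rightarrow> (nat \<Rightarrow> 'b) \<Rightarrow> nat \<Rightarrow> 'c" where
  "bconv B u v n = (\<Sum>j\<le>n. \<Sum>k\<le>n - j. B j (u k) (v (n - j - k)))"

lemma lconv_cong: "(\<And>k. k \<le> n \<Longrightarrow> u k = u' k) \<Longrightarrow> lconv L u n = lconv L u' n"
  unfolding lconv_def by (intro sum.cong) auto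

lemma bconv_cong:
  "(\<And>k. k \<le> n \<Longrightarrow> u k = u' k) \<Longrightarrow> (\<And>k. k \<le> n \<Longrightarrow> v k = v' k) \<Longrightarrow> bconv B u v n = bconv B u' v' n"
  unfolding bconv_def by (intro sum.cong) auto

lemma lconv_add:
  "additive_seq L \<Longrightarrow> lconv L (\<lambda>k. u k + u' k) = (\<lambda>n. lconv L u n + lconv L u' n)"
  by (rule ext) (simp add: lconv_def additive_seqD sum.distrib)

lemma bconv_add:
  assumes "biadditive_seq B"
  shows "bconv B (\<lambda>k. u k + u' k) v = (\<lambda>n. bconv B u v n + bconv B u' v n)"
    and "bconv B u (\<lambda>k. v k + v' k) = (\<lambda>n. bconv B u v n + bconv B u v' n)"
  by (rule ext, simp add: bconv_def biadditive_seqD[OF assms] sum.distrib)+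

lemma lconv_shift: "additive_seq L \<Longrightarrow> lconv L (seq_shift u) = seq_shift (lconv L u)"
proof (rule ext)
  fix n assume L: "additive_seq L"
  show "lconv L (seq_shift u) n = seq_shift (lconv L u) n"
  proof (cases n)
    case (Suc m)
    have "lconv L (seq_shift u) (Suc m) = (\<Sum>i\<le>m. L i (seq_shift u (Suc m - i))) + L (Suc m) (seq_shift u 0)"
      by (simp add: lconv_def)
    also have "\<dots> = lconv L u m"
      by (auto simp: lconv_def seq_shift_def additive_seqD[OF L] Suc_diff_le intro!: sum.cong)
    finally show ?thesis using Suc by (simp add: seq_shift_def)
  qed (simp add: lconv_def seq_shift_def additive_seqD[OF L])
qed

lemma bconv_shift_left: "biadditive_seq B \<Longrightarrow> bconv B (seq_shift u) v = seq_shift (bconv B u v)"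
proof (rule ext)
  fix n assume B: "biadditive_seq B"
  show "bconv B (seq_shift u) v n = seq_shift (bconv B u v) n"
  proof (cases n)
    case (Suc m)
    have "bconv B (seq_shift u) v (Suc m)
        = (\<Sum>j\<le>m. \<Sum>k\<le>Suc m - j. B j (seq_shift u k) (v (Suc m - j - k)))"
      by (simp add: bconv_def seq_shift_def biadditive_seqD[OF B])
    also have "\<dots> = bconv B u v m"
      unfolding bconv_def
    proof (rule sum.cong[OF refl])
      fix j assume "j \<in> {..m}"
      then have "Suc m - j = Suc (m - j)" by auto
      then show "(\<Sum>k\<le>Suc m - j. B j (seq_shift u k) (v (Suc m - j - k)))
          = (\<Sum>k\<le>m - j. B j (u k) (v (m - j - k)))"
        by (simp only: sum.atMost_Suc_shift) (simp add: seq_shift_def biadditive_seqD[OF B])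
    qed
    finally show ?thesis using Suc by (simp add: seq_shift_def)
  qed (simp add: bconv_def seq_shift_def biadditive_seqD[OF B])
qed

lemma bconv_shift_right: "biadditive_seq B \<Longrightarrow> bconv B u (seq_shift v) = seq_shift (bconv B u v)"
proof (rule ext)
  fix n assume B: "biadditive_seq B"
  show "bconv B u (seq_shift v) n = seq_shift (bconv B u v) n"
  proof (cases n)
    case (Suc m)
    have "bconv B u (seq_shift v) (Suc m)
        = (\<Sum>j\<le>m. \<Sum>k\<le>Suc m - j. B j (u k) (seq_shift v (Suc m - j - k)))"
      by (simp add: bconv_def seq_shift_def biadditive_seqD[OF B])
    also have "\<dots> = bconv B u v m"
      unfolding bconv_def
    proof (rule sum.cong[OF refl])
      fix j assume "j \<in> {..m}"
      then have "Suc m - j = Suc (m - j)" by auto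
      moreover have "(\<Sum>k\<le>Suc (m - j). B j (u k) (seq_shift v (Suc (m - j) - k)))
          = (\<Sum>k\<le>m - j. B j (u k) (v (m - j - k)))"
        by (auto simp: seq_shift_def biadditive_seqD[OF B] Suc_diff_le intro!: sum.cong)
      ultimately show "(\<Sum>k\<le>Suc m - j. B j (u k) (seq_shift v (Suc m - j - k)))
          = (\<Sum>k\<le>m - j. B j (u k) (v (m - j - k)))"
        by simp
    qed
    finally show ?thesis using Suc by (simp add: seq_shift_def)
  qed (simp add: bconv_def seq_shift_def biadditive_seqD[OF B])
qed

lemma lconv_const:
  assumes "additive_seq L"
  shows "lconv L (seq_const x) = (\<lambda>n. L n x)"
proof
  fix n
  show "lconv L (seq_const x) n = L n x"
    unfolding lconv_def seq_const_def
    by (subst sum_eq_single[where a = n]) (auto simp: additive_seqD[OF assms])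
qed

lemma bconv_const_left: "biadditive_seq B \<Longrightarrow> bconv B (seq_const x) v n = (\<Sum>j\<le>n. B j x (v (n - j)))"
  unfolding bconv_def seq_const_def
  by (intro sum.cong refl, subst sum_eq_single[where a = 0]) (auto simp: biadditive_seqD)

lemma bconv_const_right: "biadditive_seq B \<Longrightarrow> bconv B u (seq_const z) n = (\<Sum>j\<le>n. B j (u (n - j)) z)"
  unfolding bconv_def seq_const_def
  by (intro sum.cong refl, subst sum_eq_single[where a = "n - _"]) (auto simp: biadditive_seqD)

lemma bconv_const:
  assumes "biadditive_seq B"
  shows "bconv B (seq_const x) (seq_const y) = (\<lambda>n. B n x y)"
proof
  fix n
  show "bconv B (seq_const x) (seq_const y) n = B n x y"
    by (simp add: bconv_const_left[OF assms], subst sum_eq_single[where a = n])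
      (auto simp: seq_const_def biadditive_seqD[OF assms])
qed

lemma lconv_change_top:
  assumes L: "additive_seq L" and eq: "\<And>k. k < n \<Longrightarrow> u k = u' k"
  shows "lconv L u n = lconv L u' n + L 0 (u n - u' n)"
proof -
  have "lconv L u n = (\<Sum>i\<le>n. L i (u' (n - i)) + L i (u (n - i) - u' (n - i)))"
    unfolding lconv_def by (intro sum.cong refl) (simp add: additive_seqD[OF L])
  also have "\<dots> = lconv L u' n + (\<Sum>i\<le>n. L i (u (n - i) - u' (n - i)))"
    by (simp add: lconv_def sum.distrib)
  also have "(\<Sum>i\<le>n. L i (u (n - i) - u' (n - i))) = L 0 (u n - u' n)"
    by (subst sum_eq_single[where a = 0]) (auto simp: eq additive_seqD[OF L])
  finally show ?thesis .
qed

lemma bconv_change_top_left: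
  assumes B: "biadditive_seq B" and eq: "\<And>k. k < n \<Longrightarrow> u k = u' k"
  shows "bconv B u v n = bconv B u' v n + B 0 (u n - u' n) (v 0)"
proof -
  have "bconv B u v n = (\<Sum>j\<le>n. \<Sum>k\<le>n - j. B j (u' k) (v (n - j - k)) + B j (u k - u' k) (v (n - j - k)))"
    unfolding bconv_def by (intro sum.cong refl) (simp add: biadditive_seqD[OF B])
  also have "\<dots> = bconv B u' v n + (\<Sum>j\<le>n. \<Sum>k\<le>n - j. B j (u k - u' k) (v (n - j - k)))"
    by (simp add: bconv_def sum.distrib)
  also have "(\<Sum>j\<le>n. \<Sum>k\<le>n - j. B j (u k - u' k) (v (n - j - k))) = (\<Sum>k\<le>n. B 0 (u k - u' k) (v (n - k)))"
    by (subst sum_eq_single[where a = 0])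
      (auto simp: eq biadditive_seqD[OF B] intro!: sum.neutral)
  also have "\<dots> = B 0 (u n - u' n) (v 0)"
    by (subst sum_eq_single[where a = n]) (auto simp: eq biadditive_seqD[OF B])
  finally show ?thesis .
qed

lemma bconv_change_top_right:
  assumes B: "biadditive_seq B" and eq: "\<And>k. k < n \<Longrightarrow> v k = v' k"
  shows "bconv B u v n = bconv B u v' n + B 0 (u 0) (v n - v' n)"
proof -
  have "bconv B u v n = (\<Sum>j\<le>n. \<Sum>k\<le>n - j. B j (u k) (v' (n - j - k)) + B j (u k) (v (n - j - k) - v' (n - j - k)))"
    unfolding bconv_def by (intro sum.cong refl) (simp add: biadditive_seqD[OF B])
  also have "\<dots> = bconv B u v' n + (\<Sum>j\<le>n. \<Sum>k\<le>n - j. B j (u k) (v (n - j - k) - v' (n - j - k)))"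
    by (simp add: bconv_def sum.distrib)
  also have "(\<Sum>j\<le>n. \<Sum>k\<le>n - j. B j (u k) (v (n - j - k) - v' (n - j - k))) = (\<Sum>k\<le>n. B 0 (u k) (v (n - k) - v' (n - k)))"
    by (subst sum_eq_single[where a = 0])
      (auto simp: eq biadditive_seqD[OF B] intro!: sum.neutral)
  also have "\<dots> = B 0 (u 0) (v n - v' n)"
    by (subst sum_eq_single[where a = 0]) (auto simp: eq biadditive_seqD[OF B])
  finally show ?thesis .
qed

section \<open>Identities passing from coefficients to series\<close>

definition zinbiel_series :: "(nat \<Rightarrow> 'a \<Rightarrow> 'a \<Rightarrow> 'a::ab_group_add) \<Rightarrow> bool" where
  "zinbiel_series B \<longleftrightarrow> (\<forall>n x y z. (\<Sum>i\<le>n. B i (B (n - i) x y) z)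
     = (\<Sum>i\<le>n. B i x (B (n - i) y z) + B i x (B (n - i) z y)))"

definition zinbiel_associator ::
  "(nat \<Rightarrow> 'a \<Rightarrow> 'a \<Rightarrow> 'a::ab_group_add) \<Rightarrow> (nat \<Rightarrow> 'a) \<Rightarrow> (nat \<Rightarrow> 'a) \<Rightarrow> (nat \<Rightarrow> 'a) \<Rightarrow> nat \<Rightarrow> 'a" where
  "zinbiel_associator B u v w n =
     bconv B (bconv B u v) w n - bconv B u (bconv B v w) n - bconv B u (bconv B w v) n"

lemma zinbiel_associator_add:
  assumes "biadditive_seq B"
  shows "zinbiel_associator B (\<lambda>k. u k + u' k) v w n = zinbiel_associator B u v w n + zinbiel_associator B u' v w n"
    and "zinbiel_associator B u (\<lambda>k. v k + v' k) w n = zinbiel_associator B u v w n + zinbiel_associator B u v' w n"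
    and "zinbiel_associator B u v (\<lambda>k. w k + w' k) n = zinbiel_associator B u v w n + zinbiel_associator B u v w' n"
  by (simp_all add: zinbiel_associator_def bconv_add[OF assms])

lemma zinbiel_associator_shift:
  assumes "biadditive_seq B"
  shows "zinbiel_associator B (seq_shift u) v w n = seq_shift (zinbiel_associator B u v w) n"
    and "zinbiel_associator B u (seq_shift v) w n = seq_shift (zinbiel_associator B u v w) n"
    and "zinbiel_associator B u v (seq_shift w) n = seq_shift (zinbiel_associator B u v w) n"
  by (simp_all only: zinbiel_associator_def bconv_shift_left[OF assms] bconv_shift_right[OF assms])
    (simp_all add: zinbiel_associator_def seq_shift_def split: nat.split)

lemma zinbiel_associator_const:
  "biadditive_seq B \<Longrightarrow> zinbiel_series B \<Longrightarrow>
   zinbiel_associator B (seq_const x) (seq_const y) (seq_const z) n = 0"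
  by (simp add: zinbiel_associator_def bconv_const bconv_const_left bconv_const_right
      zinbiel_series_def sum.distrib)

text \<open>A multi-additive expression in series that commutes with shifts is determined by its
  values on constant series; this propagates the Zinbiel identity from the coefficients to
  arbitrary series.\<close>

lemma zinbiel_series_bconv:
  assumes B: "biadditive_seq B" and Z: "zinbiel_series B"
  shows "bconv B (bconv B u v) w n = bconv B u (bconv B v w) n + bconv B u (bconv B w v) n"
proof -
  have "zinbiel_associator B u v w n = 0" for u v w
  proof (induction n arbitrary: u v w rule: less_induct)
    case (less n)
    have shift: "seq_shift (zinbiel_associator B u v w) n = 0" for u v w
      using less by (intro seq_shift_eq_0)
    have "zinbiel_associator B u v w n = zinbiel_associator B (seq_const (u 0)) v w n"
      by (rule additive_vanishing_on_shifts[where \<Phi> = "\<lambda>u. zinbiel_associator B u v w n"])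
        (simp_all only: zinbiel_associator_add[OF B] zinbiel_associator_shift[OF B] shift)
    also have "\<dots> = zinbiel_associator B (seq_const (u 0)) (seq_const (v 0)) w n"
      by (rule additive_vanishing_on_shifts[where \<Phi> = "\<lambda>v. zinbiel_associator B _ v w n"])
        (simp_all only: zinbiel_associator_add[OF B] zinbiel_associator_shift[OF B] shift)
    also have "\<dots> = zinbiel_associator B (seq_const (u 0)) (seq_const (v 0)) (seq_const (w 0)) n"
      by (rule additive_vanishing_on_shifts[where \<Phi> = "\<lambda>w. zinbiel_associator B _ _ w n"])
        (simp_all only: zinbiel_associator_add[OF B] zinbiel_associator_shift[OF B] shift)
    also have "\<dots> = 0"
      by (rule zinbiel_associator_const[OF B Z])
    finally show ?case .
  qed
  then show ?thesis by (simp add: zinbiel_associator_def algebra_simps)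
qed

definition multiplicative_series ::
  "(nat \<Rightarrow> 'a \<Rightarrow> 'a \<Rightarrow> 'a) \<Rightarrow> (nat \<Rightarrow> 'b \<Rightarrow> 'b \<Rightarrow> 'b::ab_group_add) \<Rightarrow> (nat \<Rightarrow> 'a \<Rightarrow> 'b) \<Rightarrow> bool" where
  "multiplicative_series A B F \<longleftrightarrow> (\<forall>n x y. (\<Sum>i\<le>n. F i (A (n - i) x y))
     = (\<Sum>i\<le>n. \<Sum>j\<le>n - i. B i (F j x) (F (n - i - j) y)))"

definition multiplicativity_defect ::
  "(nat \<Rightarrow> 'a \<Rightarrow> 'a \<Rightarrow> 'a::ab_group_add) \<Rightarrow> (nat \<Rightarrow> 'b \<Rightarrow> 'b \<Rightarrow> 'b::ab_group_add) \<Rightarrow>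
   (nat \<Rightarrow> 'a \<Rightarrow> 'b) \<Rightarrow> (nat \<Rightarrow> 'a) \<Rightarrow> (nat \<Rightarrow> 'a) \<Rightarrow> nat \<Rightarrow> 'b" where
  "multiplicativity_defect A B F u v n = lconv F (bconv A u v) n - bconv B (lconv F u) (lconv F v) n"

context
  fixes A :: "nat \<Rightarrow> 'a \<Rightarrow> 'a \<Rightarrow> 'a::ab_group_add" and B :: "nat \<Rightarrow> 'b \<Rightarrow> 'b \<Rightarrow> 'b::ab_group_add"
    and F :: "nat \<Rightarrow> 'a \<Rightarrow> 'b"
  assumes A: "biadditive_seq A" and B: "biadditive_seq B" and F: "additive_seq F"
begin

lemma multiplicativity_defect_add:
  "multiplicativity_defect A B F (\<lambda>k. u k + u' k) v n
     = multiplicativity_defect A B F u v n + multiplicativity_defect A B F u' v n"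
  "multiplicativity_defect A B F u (\<lambda>k. v k + v' k) n
     = multiplicativity_defect A B F u v n + multiplicativity_defect A B F u v' n"
  by (simp_all add: multiplicativity_defect_def bconv_add[OF A] bconv_add[OF B] lconv_add[OF F])

lemma multiplicativity_defect_shift:
  "multiplicativity_defect A B F (seq_shift u) v n = seq_shift (multiplicativity_defect A B F u v) n"
  "multiplicativity_defect A B F u (seq_shift v) n = seq_shift (multiplicativity_defect A B F u v) n"
  by (simp_all only: multiplicativity_defect_def bconv_shift_left[OF A] bconv_shift_right[OF A]
      bconv_shift_left[OF B] bconv_shift_right[OF B] lconv_shift[OF F])
    (simp_all add: multiplicativity_defect_def seq_shift_def split: nat.split)

lemma multiplicativity_defect_const:
  "multiplicative_series A B F \<Longrightarrow> multiplicativity_defect A B F (seq_const x) (seq_const y) n = 0"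
  by (simp add: multiplicativity_defect_def bconv_const[OF A] lconv_const[OF F])
    (simp add: multiplicative_series_def lconv_def bconv_def)

lemma multiplicative_series_lconv:
  assumes M: "multiplicative_series A B F"
  shows "lconv F (bconv A u v) n = bconv B (lconv F u) (lconv F v) n"
proof -
  have "multiplicativity_defect A B F u v n = 0" for u v
  proof (induction n arbitrary: u v rule: less_induct)
    case (less n)
    have shift: "seq_shift (multiplicativity_defect A B F u v) n = 0" for u v
      using less by (intro seq_shift_eq_0)
    have "multiplicativity_defect A B F u v n = multiplicativity_defect A B F (seq_const (u 0)) v n"
      by (rule additive_vanishing_on_shifts[where \<Phi> = "\<lambda>u. multiplicativity_defect A B F u v n"])
        (simp_all only: multiplicativity_defect_add multiplicativity_defect_shift shift)
    also have "\<dots> = multiplicativity_defect A B F (seq_const (u 0)) (seq_const (v 0)) n"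
      by (rule additive_vanishing_on_shifts[where \<Phi> = "\<lambda>v. multiplicativity_defect A B F _ v n"])
        (simp_all only: multiplicativity_defect_add multiplicativity_defect_shift shift)
    also have "\<dots> = 0"
      by (rule multiplicativity_defect_const[OF M])
    finally show ?case .
  qed
  then show ?thesis by (simp add: multiplicativity_defect_def)
qed

end

section \<open>Compositional inverse of a series of linear maps\<close>

lemma additive_seq_if_linear: "(\<And>i. Vector_Spaces.linear s1 s2 (P i)) \<Longrightarrow> additive_seq P"
  by (simp add: additive_seq_def additive_def Vector_Spaces.linear_iff)

lemma biadditive_seq_if_bilin: "(\<And>i. bilin s1 s2 s3 (M i)) \<Longrightarrow> biadditive_seq M"
  by (simp add: biadditive_seq_def bilin_def additive_def Vector_Spaces.linear_iff)

lemma vector_space_pair_if_linear: "Vector_Spaces.linear s1 s2 f \<Longrightarrow> vector_space_pair s1 s2"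
  by (simp add: Vector_Spaces.linear_iff vector_space_pair_def)

lemma linear_compose_fun:
  "Vector_Spaces.linear s1 s2 f \<Longrightarrow> Vector_Spaces.linear s2 s3 g \<Longrightarrow> Vector_Spaces.linear s1 s3 (\<lambda>x. g (f x))"
  using Vector_Spaces.linear_compose[of s1 s2 f s3 g] by (simp add: comp_def)

lemma linear_diff_fun:
  "Vector_Spaces.linear s1 s2 f \<Longrightarrow> Vector_Spaces.linear s1 s2 g \<Longrightarrow> Vector_Spaces.linear s1 s2 (\<lambda>x. f x - g x)"
  by (rule vector_space_pair.linear_compose_sub[OF vector_space_pair_if_linear])

lemma linear_sum_fun:
  assumes "vector_space s1" "vector_space s2" "\<And>i. i \<in> A \<Longrightarrow> Vector_Spaces.linear s1 s2 (f i)"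
  shows "Vector_Spaces.linear s1 s2 (\<lambda>x. \<Sum>i\<in>A. f i x)"
  using assms by (intro vector_space_pair.linear_compose_sum) (simp_all add: vector_space_pair_def)

lemma sum_triangle_reindex:
  fixes g :: "nat \<Rightarrow> nat \<Rightarrow> nat \<Rightarrow> 'a::comm_monoid_add"
  shows "(\<Sum>s\<le>n. \<Sum>i\<le>s. g i (s - i) (n - s)) = (\<Sum>i\<le>n. \<Sum>j\<le>n - i. g i j (n - i - j))"
proof -
  have "(\<Sum>i\<le>n. \<Sum>j\<le>n - i. g i j (n - i - j)) = (\<Sum>(i, j)\<in>{(i, j). i + j \<le> n}. g i j (n - i - j))"
    by (subst sum.Sigma) (auto intro!: sum.cong)
  also have "\<dots> = (\<Sum>s\<le>n. \<Sum>i\<le>s. g i (s - i) (n - i - (s - i)))"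
    by (rule sum.triangle_reindex_eq)
  also have "\<dots> = (\<Sum>s\<le>n. \<Sum>i\<le>s. g i (s - i) (n - s))"
    by (intro sum.cong refl) auto
  finally show ?thesis by simp
qed

definition comp_conv :: "(nat \<Rightarrow> 'b \<Rightarrow> 'c::comm_monoid_add) \<Rightarrow> (nat \<Rightarrow> 'a \<Rightarrow> 'b) \<Rightarrow> nat \<Rightarrow> 'a \<Rightarrow> 'c" where
  "comp_conv A B n x = (\<Sum>i\<le>n. A i (B (n - i) x))"

definition comp_unit :: "nat \<Rightarrow> 'a::zero \<Rightarrow> 'a" where
  "comp_unit n x = (if n = 0 then x else 0)"

lemma comp_conv_assoc:
  assumes "additive_seq A"
  shows "comp_conv (comp_conv A B) C = comp_conv A (comp_conv B C)"
proof (intro ext)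
  fix n x
  have "comp_conv A (comp_conv B C) n x = (\<Sum>i\<le>n. \<Sum>j\<le>n - i. A i (B j (C (n - i - j) x)))"
    by (simp add: comp_conv_def additive_seqD[OF assms])
  also have "\<dots> = (\<Sum>s\<le>n. \<Sum>i\<le>s. A i (B (s - i) (C (n - s) x)))"
    by (rule sum_triangle_reindex[symmetric])
  finally show "comp_conv (comp_conv A B) C n x = comp_conv A (comp_conv B C) n x"
    by (simp add: comp_conv_def)
qed

lemma comp_conv_unit_left: "comp_conv comp_unit A = A"
  by (intro ext) (simp add: comp_conv_def comp_unit_def)

lemma comp_conv_unit_right:
  assumes "additive_seq A"
  shows "comp_conv A comp_unit = A"
proof (intro ext)
  fix n x
  show "comp_conv A comp_unit n x = A n x"
    unfolding comp_conv_def
    by (subst sum_eq_single[where a = n]) (auto simp: comp_unit_def additive_seqD[OF assms])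
qed

fun comp_inverse :: "(nat \<Rightarrow> 'a \<Rightarrow> 'a::ab_group_add) \<Rightarrow> nat \<Rightarrow> 'a \<Rightarrow> 'a" where
  "comp_inverse P n = (if n = 0 then (\<lambda>x. x) else (\<lambda>x. - (\<Sum>i<n. comp_inverse P i (P (n - i) x))))"

declare comp_inverse.simps [simp del]

lemma comp_inverse_0 [simp]: "comp_inverse P 0 = (\<lambda>x. x)"
  by (simp add: comp_inverse.simps)

lemma comp_inverse_pos: "n > 0 \<Longrightarrow> comp_inverse P n x = - (\<Sum>i<n. comp_inverse P i (P (n - i) x))"
  by (simp add: comp_inverse.simps)

lemma comp_conv_comp_inverse_left:
  assumes "\<And>x. P 0 x = x"
  shows "comp_conv (comp_inverse P) P = comp_unit"
proof (intro ext)
  fix n x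
  show "comp_conv (comp_inverse P) P n x = comp_unit n x"
  proof (cases "n = 0")
    case False
    have "comp_conv (comp_inverse P) P n x = (\<Sum>i<n. comp_inverse P i (P (n - i) x)) + comp_inverse P n (P 0 x)"
      by (simp add: comp_conv_def lessThan_Suc_atMost[symmetric])
    with False show ?thesis by (simp add: comp_inverse_pos assms comp_unit_def)
  qed (simp add: comp_conv_def comp_unit_def assms)
qed

lemma additive_seq_comp_inverse:
  assumes "additive_seq P"
  shows "additive_seq (comp_inverse P)"
proof -
  have "additive (comp_inverse P n)" for n
  proof (induction n rule: less_induct)
    case (less n)
    have "comp_inverse P i (P (n - i) (x + y)) = comp_inverse P i (P (n - i) x) + comp_inverse P i (P (n - i) y)"
      if "i < n" for i x y
      using less[OF that] by (simp add: additive_seqD[OF assms] additive.add)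
    then show ?case
      by (cases "n = 0") (simp_all add: additive_def comp_inverse_pos sum.distrib)
  qed
  then show ?thesis by (simp add: additive_seq_def)
qed

lemma comp_conv_comp_inverse_right:
  assumes P: "additive_seq P" and P0: "\<And>x. P 0 x = x"
  shows "comp_conv P (comp_inverse P) = comp_unit"
proof -
  let ?Q = "comp_inverse P"
  let ?R = "comp_inverse ?Q"
  have R: "additive_seq ?R"
    by (intro additive_seq_comp_inverse P)
  have "P = comp_conv (comp_conv ?R ?Q) P"
    by (simp add: comp_conv_comp_inverse_left comp_conv_unit_left)
  also have "\<dots> = ?R"
    by (simp add: comp_conv_assoc[OF R] comp_conv_comp_inverse_left[of P, OF P0] comp_conv_unit_right[OF R])
  finally have "P = ?R" .
  then show ?thesis
    using comp_conv_comp_inverse_left[of ?Q] by simp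
qed

lemma fps_inverse_of_comp_inverse:
  "additive_seq P \<Longrightarrow> (\<And>x. P 0 x = x) \<Longrightarrow> fps_inverse_of P (comp_inverse P)"
  using comp_conv_comp_inverse_left[of P] comp_conv_comp_inverse_right[of P]
  unfolding fps_inverse_of_def comp_conv_def comp_unit_def by metis

lemma linear_comp_inverse:
  assumes P: "\<And>i. Vector_Spaces.linear s s (P i)"
  shows "Vector_Spaces.linear s s (comp_inverse P n)"
proof (induction n rule: less_induct)
  case (less n)
  have vs: "vector_space s"
    using P by (simp add: Vector_Spaces.linear_iff)
  have "Vector_Spaces.linear s s (\<lambda>x. \<Sum>i<n. comp_inverse P i (P (n - i) x))"
    by (intro linear_sum_fun vs linear_compose_fun[OF P] less) simp
  then show ?case
    using vector_space_pair.linear_compose_neg[OF vector_space_pair_if_linear]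
    by (cases "n = 0") (simp_all add: comp_inverse_pos vector_space.linear_ident[OF vs] fun_eq_iff)
qed

section \<open>Defects of a formal isomorphism\<close>

text \<open>A series \<open>P\<^sub>t\<close> of maps with \<open>P\<^sub>0 = id\<close> is an isomorphism from the trivial deformation
  of \<open>M\<^sub>0\<close> onto \<open>M\<^sub>t\<close> iff all \<open>hom_defect M P k\<close> vanish, and it carries \<open>F\<^sub>0\<close> to \<open>F\<^sub>t\<close>
  (with \<open>Q\<^sub>t\<close> on the target) iff all \<open>intertwining_defect F P Q k\<close> vanish.\<close>

definition hom_defect :: "(nat \<Rightarrow> 'a \<Rightarrow> 'a \<Rightarrow> 'a::ab_group_add) \<Rightarrow> (nat \<Rightarrow> 'a \<Rightarrow> 'a) \<Rightarrow> nat \<Rightarrow> 'a \<Rightarrow> 'a \<Rightarrow> 'a" where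
  "hom_defect M P k x y = bconv M (\<lambda>i. P i x) (\<lambda>i. P i y) k - P k (M 0 x y)"

definition intertwining_defect ::
  "(nat \<Rightarrow> 'a \<Rightarrow> 'b::ab_group_add) \<Rightarrow> (nat \<Rightarrow> 'a \<Rightarrow> 'a) \<Rightarrow> (nat \<Rightarrow> 'b \<Rightarrow> 'b) \<Rightarrow> nat \<Rightarrow> 'a \<Rightarrow> 'b" where
  "intertwining_defect F P Q k x = lconv F (\<lambda>i. P i x) k - Q k (F 0 x)"

lemma hom_defect_0: "(\<And>x. P 0 x = x) \<Longrightarrow> hom_defect M P 0 x y = 0"
  by (simp add: hom_defect_def bconv_def)

lemma intertwining_defect_0: "(\<And>x. P 0 x = x) \<Longrightarrow> (\<And>x. Q 0 x = x) \<Longrightarrow> intertwining_defect F P Q 0 x = 0"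
  by (simp add: intertwining_defect_def lconv_def)

lemma hom_defect_cong: "(\<And>k. k \<le> n \<Longrightarrow> P k = P' k) \<Longrightarrow> hom_defect M P n x y = hom_defect M P' n x y"
  unfolding hom_defect_def by (subst bconv_cong[where u' = "\<lambda>i. P' i x" and v' = "\<lambda>i. P' i y"]) auto

lemma intertwining_defect_cong:
  "(\<And>k. k \<le> n \<Longrightarrow> P k = P' k) \<Longrightarrow> (\<And>k. k \<le> n \<Longrightarrow> Q k = Q' k) \<Longrightarrow>
   intertwining_defect F P Q n x = intertwining_defect F P' Q' n x"
  unfolding intertwining_defect_def by (subst lconv_cong[where u' = "\<lambda>i. P' i x"]) auto

lemma hom_defect_add_right:
  assumes M: "biadditive_seq M" and P: "additive_seq P"
  shows "hom_defect M P n x (a + b) = hom_defect M P n x a + hom_defect M P n x b"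
proof -
  have "(\<lambda>i. P i (a + b)) = (\<lambda>i. P i a + P i b)"
    by (simp add: additive_seqD[OF P])
  then show ?thesis
    by (simp add: hom_defect_def bconv_add[OF M] biadditive_seqD[OF M] additive_seqD[OF P])
qed

text \<open>The first nonvanishing defect is a cocycle: expand both sides of the Zinbiel
  identity for the series \<open>P\<^sub>t x, P\<^sub>t y, P\<^sub>t z\<close> in degree \<open>N\<close>.\<close>

lemma hom_defect_cocycle:
  assumes M: "biadditive_seq M" and Z: "zinbiel_series M"
    and P: "additive_seq P" and P0: "\<And>x. P 0 x = x"
    and lower: "\<And>k x y. k < N \<Longrightarrow> hom_defect M P k x y = 0"
  shows "zd2 (M 0) (M 0) (M 0) (hom_defect M P N) = (\<lambda>x y z. 0)"
proof (intro ext)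
  fix x y z
  let ?E = "hom_defect M P N" and ?m = "M 0"
  have m: "?m (?m x y) z = ?m x (?m y z) + ?m x (?m z y)"
    using Z[unfolded zinbiel_series_def, rule_format, of 0] by simp
  have lower': "bconv M (\<lambda>i. P i a) (\<lambda>i. P i b) k = P k (?m a b)" if "k < N" for k a b
    using lower[OF that] by (simp add: hom_defect_def)
  have top: "bconv M (\<lambda>i. P i a) (\<lambda>i. P i b) N = ?E a b + P N (?m a b)" for a b
    by (simp add: hom_defect_def)
  have L: "bconv M (bconv M (\<lambda>i. P i x) (\<lambda>i. P i y)) (\<lambda>i. P i z) N
      = ?E (?m x y) z + P N (?m (?m x y) z) + ?m (?E x y) z"
    by (subst bconv_change_top_left[OF M, where u' = "\<lambda>i. P i (?m x y)"]) (simp_all add: lower' top P0)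
  have R1: "bconv M (\<lambda>i. P i x) (bconv M (\<lambda>i. P i y) (\<lambda>i. P i z)) N
      = ?E x (?m y z) + P N (?m x (?m y z)) + ?m x (?E y z)"
    by (subst bconv_change_top_right[OF M, where v' = "\<lambda>i. P i (?m y z)"]) (simp_all add: lower' top P0)
  have R2: "bconv M (\<lambda>i. P i x) (bconv M (\<lambda>i. P i z) (\<lambda>i. P i y)) N
      = ?E x (?m z y) + P N (?m x (?m z y)) + ?m x (?E z y)"
    by (subst bconv_change_top_right[OF M, where v' = "\<lambda>i. P i (?m z y)"]) (simp_all add: lower' top P0)
  have "bconv M (bconv M (\<lambda>i. P i x) (\<lambda>i. P i y)) (\<lambda>i. P i z) N
      = bconv M (\<lambda>i. P i x) (bconv M (\<lambda>i. P i y) (\<lambda>i. P i z)) N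
        + bconv M (\<lambda>i. P i x) (bconv M (\<lambda>i. P i z) (\<lambda>i. P i y)) N"
    by (rule zinbiel_series_bconv[OF M Z])
  moreover have "P N (?m (?m x y) z) = P N (?m x (?m y z)) + P N (?m x (?m z y))"
    by (simp add: m additive_seqD[OF P])
  ultimately show "zd2 ?m ?m ?m ?E x y z = 0"
    unfolding L R1 R2
    by (simp add: zd2_def hom_defect_add_right[OF M P] biadditive_seqD[OF M] algebra_simps)
qed

lemma intertwining_defect_cocycle:
  assumes A: "biadditive_seq A" and B: "biadditive_seq B" and F: "additive_seq F"
    and mult: "multiplicative_series A B F"
    and P0: "\<And>x. P 0 x = x" and Q0: "\<And>x. Q 0 x = x"
    and lowerA: "\<And>k x y. k < N \<Longrightarrow> hom_defect A P k x y = 0"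
    and lowerF: "\<And>k x. k < N \<Longrightarrow> intertwining_defect F P Q k x = 0"
  shows "F 0 (hom_defect A P N x y) - hom_defect B Q N (F 0 x) (F 0 y)
      - zd1 (A 0) (\<lambda>x s. B 0 (F 0 x) s) (\<lambda>s x. B 0 s (F 0 x)) (intertwining_defect F P Q N) x y = 0"
proof -
  let ?EA = "hom_defect A P N" and ?EB = "hom_defect B Q N" and ?EF = "intertwining_defect F P Q N"
  have hom: "F 0 (A 0 a b) = B 0 (F 0 a) (F 0 b)" for a b
    using mult[unfolded multiplicative_series_def, rule_format, of 0] by simp
  have lowerA': "bconv A (\<lambda>i. P i a) (\<lambda>i. P i b) k = P k (A 0 a b)" if "k < N" for k a b
    using lowerA[OF that] by (simp add: hom_defect_def)
  have lowerF': "lconv F (\<lambda>i. P i a) k = Q k (F 0 a)" if "k < N" for k a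
    using lowerF[OF that] by (simp add: intertwining_defect_def)
  have topA: "bconv A (\<lambda>i. P i a) (\<lambda>i. P i b) N = ?EA a b + P N (A 0 a b)" for a b
    by (simp add: hom_defect_def)
  have topB: "bconv B (\<lambda>i. Q i a) (\<lambda>i. Q i b) N = ?EB a b + Q N (B 0 a b)" for a b
    by (simp add: hom_defect_def)
  have topF: "lconv F (\<lambda>i. P i a) N = ?EF a + Q N (F 0 a)" for a
    by (simp add: intertwining_defect_def)
  have F0: "lconv F (\<lambda>i. P i a) 0 = F 0 a" for a
    by (simp add: lconv_def P0)
  have L: "lconv F (bconv A (\<lambda>i. P i x) (\<lambda>i. P i y)) N = ?EF (A 0 x y) + Q N (F 0 (A 0 x y)) + F 0 (?EA x y)"
    by (subst lconv_change_top[OF F, where u' = "\<lambda>i. P i (A 0 x y)"]) (simp_all add: lowerA' topA topF)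
  have R1: "bconv B (lconv F (\<lambda>i. P i x)) (lconv F (\<lambda>i. P i y)) N
      = bconv B (\<lambda>i. Q i (F 0 x)) (lconv F (\<lambda>i. P i y)) N + B 0 (?EF x) (F 0 y)"
    by (subst bconv_change_top_left[OF B, where u' = "\<lambda>i. Q i (F 0 x)"]) (simp_all add: lowerF' topF F0)
  have R2: "bconv B (\<lambda>i. Q i (F 0 x)) (lconv F (\<lambda>i. P i y)) N
      = ?EB (F 0 x) (F 0 y) + Q N (B 0 (F 0 x) (F 0 y)) + B 0 (F 0 x) (?EF y)"
    by (subst bconv_change_top_right[OF B, where v' = "\<lambda>i. Q i (F 0 y)"]) (simp_all add: lowerF' topF topB Q0)
  have "lconv F (bconv A (\<lambda>i. P i x) (\<lambda>i. P i y)) N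
      = bconv B (lconv F (\<lambda>i. P i x)) (lconv F (\<lambda>i. P i y)) N"
    by (rule multiplicative_series_lconv[OF A B F mult])
  then show ?thesis
    unfolding L R1 R2 hom by (simp add: zd1_def algebra_simps)
qed

lemma hom_defect_fun_upd:
  assumes M: "biadditive_seq M" and N: "N > 0" and P0: "\<And>x. P 0 x = x"
  shows "hom_defect M (P(N := (\<lambda>x. P N x - b x))) N x y = hom_defect M P N x y - zd1 (M 0) (M 0) (M 0) b x y"
proof -
  let ?P' = "P(N := (\<lambda>x. P N x - b x))"
  have "bconv M (\<lambda>i. ?P' i x) (\<lambda>i. ?P' i y) N = bconv M (\<lambda>i. P i x) (\<lambda>i. ?P' i y) N + M 0 (- b x) y"
    by (subst bconv_change_top_left[OF M, where u' = "\<lambda>i. P i x"]) (use N in \<open>simp_all add: P0\<close>)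
  also have "bconv M (\<lambda>i. P i x) (\<lambda>i. ?P' i y) N = bconv M (\<lambda>i. P i x) (\<lambda>i. P i y) N + M 0 x (- b y)"
    by (subst bconv_change_top_right[OF M, where v' = "\<lambda>i. P i y"]) (simp_all add: P0)
  finally show ?thesis
    by (simp add: hom_defect_def zd1_def biadditive_seqD[OF M] algebra_simps)
qed

lemma intertwining_defect_fun_upd:
  assumes F: "additive_seq F"
  shows "intertwining_defect F (P(N := (\<lambda>x. P N x - b x))) (Q(N := (\<lambda>x. Q N x - c x))) N x
     = intertwining_defect F P Q N x - (F 0 (b x) - c (F 0 x))"
proof -
  have "lconv F (\<lambda>i. (P(N := (\<lambda>x. P N x - b x))) i x) N = lconv F (\<lambda>i. P i x) N + F 0 (- b x)"
    by (subst lconv_change_top[OF F, where u' = "\<lambda>i. P i x"]) simp_all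
  then show ?thesis
    by (simp add: intertwining_defect_def additive_seqD[OF F] algebra_simps)
qed

lemma bilin_hom_defect:
  assumes vs: "vector_space s" and M: "\<And>i. bilin s s s (M i)"
    and P: "\<And>i. Vector_Spaces.linear s s (P i)"
  shows "bilin s s s (hom_defect M P N)"
proof -
  have M1: "Vector_Spaces.linear s s (M i x)" and M2: "Vector_Spaces.linear s s (\<lambda>x. M i x y)" for i x y
    using M by (auto simp: bilin_def)
  have "Vector_Spaces.linear s s (\<lambda>y. hom_defect M P N x y)" for x
    unfolding hom_defect_def bconv_def
    by (intro linear_diff_fun linear_sum_fun[OF vs vs] linear_compose_fun[OF P M1] linear_compose_fun[OF M1 P])
  moreover have "Vector_Spaces.linear s s (\<lambda>x. hom_defect M P N x y)" for y
    unfolding hom_defect_def bconv_def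
    by (intro linear_diff_fun linear_sum_fun[OF vs vs] linear_compose_fun[OF P M2] linear_compose_fun[OF M2 P])
  ultimately show ?thesis
    by (simp add: bilin_def)
qed

lemma linear_intertwining_defect:
  assumes vR: "vector_space sR" and vS: "vector_space sS"
    and F: "\<And>i. Vector_Spaces.linear sR sS (F i)"
    and P: "\<And>i. Vector_Spaces.linear sR sR (P i)" and Q: "\<And>i. Vector_Spaces.linear sS sS (Q i)"
  shows "Vector_Spaces.linear sR sS (intertwining_defect F P Q N)"
proof -
  have "Vector_Spaces.linear sR sS (\<lambda>x. intertwining_defect F P Q N x)"
    unfolding intertwining_defect_def lconv_def
    by (intro linear_diff_fun linear_sum_fun[OF vR vS] linear_compose_fun[OF P F] linear_compose_fun[OF F Q])
  then show ?thesis by simp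
qed

lemma conj_comp_inverse_bconv:
  assumes P: "additive_seq P" and P0: "\<And>x. P 0 x = x"
    and hom: "\<And>n x y. bconv M (\<lambda>k. P k x) (\<lambda>k. P k y) n = P n (M 0 x y)"
  shows "(\<Sum>i\<le>n. \<Sum>j\<le>n - i. \<Sum>k\<le>n - i - j. comp_inverse P i (M j (P k x) (P (n - i - j - k) y)))
    = (if n = 0 then M 0 x y else 0)"
proof -
  have "(\<Sum>i\<le>n. \<Sum>j\<le>n - i. \<Sum>k\<le>n - i - j. comp_inverse P i (M j (P k x) (P (n - i - j - k) y)))
      = (\<Sum>i\<le>n. comp_inverse P i (bconv M (\<lambda>k. P k x) (\<lambda>k. P k y) (n - i)))"
    by (simp add: bconv_def additive_seqD[OF additive_seq_comp_inverse[OF P]])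
  also have "\<dots> = comp_conv (comp_inverse P) P n (M 0 x y)"
    by (simp add: hom comp_conv_def)
  finally show ?thesis
    by (simp add: comp_conv_comp_inverse_left[of P, OF P0] comp_unit_def)
qed

lemma conj_comp_inverse_lconv:
  assumes Q: "additive_seq Q" and Q0: "\<And>x. Q 0 x = x"
    and intertw: "\<And>n x. lconv F (\<lambda>k. P k x) n = Q n (F 0 x)"
  shows "(\<Sum>i\<le>n. \<Sum>j\<le>n - i. comp_inverse Q i (F j (P (n - i - j) x))) = (if n = 0 then F 0 x else 0)"
proof -
  have "(\<Sum>i\<le>n. \<Sum>j\<le>n - i. comp_inverse Q i (F j (P (n - i - j) x)))
      = (\<Sum>i\<le>n. comp_inverse Q i (lconv F (\<lambda>k. P k x) (n - i)))"
    by (simp add: lconv_def additive_seqD[OF additive_seq_comp_inverse[OF Q]])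
  also have "\<dots> = comp_conv (comp_inverse Q) Q n (F 0 x)"
    by (simp add: intertw comp_conv_def)
  finally show ?thesis
    by (simp add: comp_conv_comp_inverse_left[of Q, OF Q0] comp_unit_def)
qed

section \<open>Trivializing a deformation of a morphism\<close>

lemma exists_seq_if_extendable:
  fixes C :: "nat \<Rightarrow> (nat \<Rightarrow> 'a) \<Rightarrow> bool"
  assumes locality: "\<And>k s s'. (\<And>i. i \<le> k \<Longrightarrow> s i = s' i) \<Longrightarrow> C k s \<Longrightarrow> C k s'"
    and extend: "\<And>N s. (\<And>k. k < N \<Longrightarrow> C k s) \<Longrightarrow> \<exists>a. C N (s(N := a))"
  shows "\<exists>s. \<forall>k. C k s"
proof -
  \<comment> \<open>\<open>g n\<close> is the sequence after its terms \<open>0, \<dots>, n - 1\<close> have been chosen.\<close>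
  define g :: "nat \<Rightarrow> nat \<Rightarrow> 'a"
    where "g = rec_nat (\<lambda>_. undefined) (\<lambda>n t. t(n := SOME a. C n (t(n := a))))"
  have g_Suc: "g (Suc n) = (g n)(n := SOME a. C n ((g n)(n := a)))" for n
    by (simp add: g_def)
  have stable: "g m k = g (Suc k) k" if "k < m" for k m
    using that by (induction m) (auto simp: g_Suc less_Suc_eq)
  have valid: "C k (g n)" if "k < n" for k n
    using that
  proof (induction n arbitrary: k)
    case (Suc n)
    show ?case
    proof (cases "k = n")
      case True
      have "\<exists>a. C n ((g n)(n := a))"
        by (rule extend) (rule Suc.IH)
      then show ?thesis
        unfolding True g_Suc by (rule someI_ex)
    next
      case False
      with Suc have "C k (g n)" by simp
      then show ?thesis
        by (rule locality[rotated]) (use False Suc.prems in \<open>simp add: g_Suc\<close>)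
    qed
  qed simp
  have "C k (\<lambda>i. g (Suc i) i)" for k
  proof (rule locality[OF _ valid[of k "Suc k"]])
    show "g (Suc k) i = g (Suc i) i" if "i \<le> k" for i
      using that by (intro stable) simp
  qed simp
  then show ?thesis by blast
qed

locale zinbiel_morphism_deformation =
  fixes sR :: "'k::field \<Rightarrow> 'r::ab_group_add \<Rightarrow> 'r" and mR :: "'r \<Rightarrow> 'r \<Rightarrow> 'r"
    and sS :: "'k \<Rightarrow> 's::ab_group_add \<Rightarrow> 's" and mS :: "'s \<Rightarrow> 's \<Rightarrow> 's" and f :: "'r \<Rightarrow> 's"
    and MR :: "nat \<Rightarrow> 'r \<Rightarrow> 'r \<Rightarrow> 'r" and MS :: "nat \<Rightarrow> 's \<Rightarrow> 's \<Rightarrow> 's" and F :: "nat \<Rightarrow> 'r \<Rightarrow> 's"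
  assumes morphism: "zinb_morphism sR mR sS mS f"
    and deformation: "is_deformation sR mR sS mS f MR MS F"
begin

lemma vector_space_R: "vector_space sR" and vector_space_S: "vector_space sS"
  using morphism by (simp_all add: zinb_morphism_def zinbiel_def)

lemma constant_terms [simp]: "MR 0 = mR" "MS 0 = mS" "F 0 = f"
  using deformation by (simp_all add: is_deformation_def)

lemma bilin_MR: "bilin sR sR sR (MR i)" and bilin_MS: "bilin sS sS sS (MS i)"
  and linear_F: "Vector_Spaces.linear sR sS (F i)"
  using deformation by (simp_all add: is_deformation_def C2_f_def)

lemma biadditive_MR: "biadditive_seq MR"
  by (rule biadditive_seq_if_bilin) (rule bilin_MR)

lemma biadditive_MS: "biadditive_seq MS"
  by (rule biadditive_seq_if_bilin) (rule bilin_MS)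

lemma additive_F: "additive_seq F"
  by (rule additive_seq_if_linear) (rule linear_F)

lemma zinbiel_MR: "zinbiel_series MR" and zinbiel_MS: "zinbiel_series MS"
  and multiplicative_F: "multiplicative_series MR MS F"
  using deformation by (simp_all add: is_deformation_def zinbiel_series_def multiplicative_series_def)

definition trivializes_at :: "nat \<Rightarrow> (nat \<Rightarrow> 'r \<Rightarrow> 'r) \<Rightarrow> (nat \<Rightarrow> 's \<Rightarrow> 's) \<Rightarrow> bool" where
  "trivializes_at k P Q \<longleftrightarrow>
     Vector_Spaces.linear sR sR (P k) \<and> Vector_Spaces.linear sS sS (Q k) \<and>
     (k = 0 \<longrightarrow> (\<forall>x. P 0 x = x) \<and> (\<forall>x. Q 0 x = x)) \<and>
     (\<forall>x y. hom_defect MR P k x y = 0) \<and> (\<forall>x y. hom_defect MS Q k x y = 0) \<and>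
     (\<forall>x. intertwining_defect F P Q k x = 0)"

lemma trivializes_at_cong:
  assumes "\<And>i. i \<le> k \<Longrightarrow> P i = P' i" "\<And>i. i \<le> k \<Longrightarrow> Q i = Q' i"
  shows "trivializes_at k P Q \<longleftrightarrow> trivializes_at k P' Q'"
  using hom_defect_cong[of k P P' MR] hom_defect_cong[of k Q Q' MS]
    intertwining_defect_cong[of k P P' Q Q' F] assms
  by (simp add: trivializes_at_def)

lemma defects_cocycle:
  assumes P: "\<And>k. Vector_Spaces.linear sR sR (P k)" and Q: "\<And>k. Vector_Spaces.linear sS sS (Q k)"
    and P0: "\<And>x. P 0 x = x" and Q0: "\<And>x. Q 0 x = x"
    and lower: "\<And>k. k < N \<Longrightarrow> trivializes_at k P Q"
  defines "c \<equiv> (hom_defect MR P N, hom_defect MS Q N, intertwining_defect F P Q N)"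
  shows "c \<in> C2_f sR sS" and "d2_f mR mS f c = (\<lambda>x y z. 0, \<lambda>x y z. 0, \<lambda>x y. 0)"
proof -
  show "c \<in> C2_f sR sS"
    using bilin_hom_defect[OF vector_space_R bilin_MR P] bilin_hom_defect[OF vector_space_S bilin_MS Q]
      linear_intertwining_defect[OF vector_space_R vector_space_S linear_F P Q]
    by (simp add: c_def C2_f_def)
  have aP: "additive_seq P" and aQ: "additive_seq Q"
    by (rule additive_seq_if_linear, rule P, rule additive_seq_if_linear, rule Q)
  have lower_R: "\<And>k x y. k < N \<Longrightarrow> hom_defect MR P k x y = 0"
    and lower_S: "\<And>k x y. k < N \<Longrightarrow> hom_defect MS Q k x y = 0"
    and lower_F: "\<And>k x. k < N \<Longrightarrow> intertwining_defect F P Q k x = 0"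
    using lower by (simp_all add: trivializes_at_def)
  show "d2_f mR mS f c = (\<lambda>x y z. 0, \<lambda>x y z. 0, \<lambda>x y. 0)"
    using hom_defect_cocycle[OF biadditive_MR zinbiel_MR aP P0 lower_R]
      hom_defect_cocycle[OF biadditive_MS zinbiel_MS aQ Q0 lower_S]
      intertwining_defect_cocycle[OF biadditive_MR biadditive_MS additive_F multiplicative_F P0 Q0 lower_R lower_F]
    by (simp add: c_def d2_f_def fun_eq_iff)
qed

lemma trivializes_at_fun_upd:
  assumes H2: "H2_f_zero sR mR sS mS f" and N: "N > 0"
    and P: "\<And>k. Vector_Spaces.linear sR sR (P k)" and Q: "\<And>k. Vector_Spaces.linear sS sS (Q k)"
    and P0: "\<And>x. P 0 x = x" and Q0: "\<And>x. Q 0 x = x"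
    and lower: "\<And>k. k < N \<Longrightarrow> trivializes_at k P Q"
  shows "\<exists>bR bS. trivializes_at N (P(N := (\<lambda>x. P N x - bR x))) (Q(N := (\<lambda>x. Q N x - bS x)))"
proof -
  obtain bR bS where b: "(bR, bS) \<in> C1_f sR sS"
    and d1: "d1_f mR mS f (bR, bS) = (hom_defect MR P N, hom_defect MS Q N, intertwining_defect F P Q N)"
    using H2 defects_cocycle[OF P Q P0 Q0 lower] unfolding H2_f_zero_def by fast
  have "trivializes_at N (P(N := (\<lambda>x. P N x - bR x))) (Q(N := (\<lambda>x. Q N x - bS x)))"
    using b d1 N P0 Q0
    by (simp add: trivializes_at_def C1_f_def d1_f_def fun_eq_iff linear_diff_fun P Q
        hom_defect_fun_upd[OF biadditive_MR] hom_defect_fun_upd[OF biadditive_MS]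
        intertwining_defect_fun_upd[OF additive_F])
  then show ?thesis by blast
qed

lemma trivializes_at_extend:
  assumes H2: "H2_f_zero sR mR sS mS f" and lower: "\<And>k. k < N \<Longrightarrow> trivializes_at k P Q"
  shows "\<exists>p q. trivializes_at N (P(N := p)) (Q(N := q))"
proof (cases "N = 0")
  case True
  have "trivializes_at 0 (P(0 := (\<lambda>x. x))) (Q(0 := (\<lambda>x. x)))"
    by (simp add: trivializes_at_def hom_defect_0 intertwining_defect_0
        vector_space.linear_ident[OF vector_space_R] vector_space.linear_ident[OF vector_space_S])
  with True show ?thesis by blast
next
  case False
  \<comment> \<open>Truncating above \<open>N\<close> makes every coefficient linear, as the cocycle argument needs.\<close>
  define P' where "P' k = (if k < N then P k else (\<lambda>x. 0))" for k
  define Q' where "Q' k = (if k < N then Q k else (\<lambda>x. 0))" for k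
  have "trivializes_at k P' Q'" if "k < N" for k
    using lower[OF that] trivializes_at_cong[of k P' P Q' Q] that by (simp add: P'_def Q'_def)
  moreover have "Vector_Spaces.linear sR sR (P' k)" "Vector_Spaces.linear sS sS (Q' k)" for k
    using calculation[of k] vector_space_pair.linear_zero[of sR sR] vector_space_pair.linear_zero[of sS sS]
      vector_space_R vector_space_S
    by (auto simp: P'_def Q'_def trivializes_at_def vector_space_pair_def)
  moreover have "P' 0 x = x" "Q' 0 y = y" for x y
    using calculation(1)[of 0] False by (simp_all add: trivializes_at_def)
  ultimately obtain bR bS where
    "trivializes_at N (P'(N := (\<lambda>x. P' N x - bR x))) (Q'(N := (\<lambda>x. Q' N x - bS x)))"
    using trivializes_at_fun_upd[OF H2, of N P' Q'] False by blast
  then have "trivializes_at N (P(N := (\<lambda>x. P' N x - bR x))) (Q(N := (\<lambda>x. Q' N x - bS x)))"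
    by (rule trivializes_at_cong[THEN iffD1, rotated -1]) (simp_all add: P'_def Q'_def)
  then show ?thesis by blast
qed

lemma exists_trivializing:
  assumes "H2_f_zero sR mR sS mS f"
  shows "\<exists>P Q. \<forall>k. trivializes_at k P Q"
proof -
  have "\<exists>s. \<forall>k. trivializes_at k (\<lambda>i. fst (s i)) (\<lambda>i. snd (s i))"
  proof (rule exists_seq_if_extendable)
    show "trivializes_at k (\<lambda>i. fst (s' i)) (\<lambda>i. snd (s' i))"
      if "\<And>i. i \<le> k \<Longrightarrow> s i = s' i" "trivializes_at k (\<lambda>i. fst (s i)) (\<lambda>i. snd (s i))" for k s s'
      using that trivializes_at_cong[of k "\<lambda>i. fst (s i)" "\<lambda>i. fst (s' i)"] by simp
    show "\<exists>a. trivializes_at N (\<lambda>i. fst ((s(N := a)) i)) (\<lambda>i. snd ((s(N := a)) i))"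
      if lower: "\<And>k. k < N \<Longrightarrow> trivializes_at k (\<lambda>i. fst (s i)) (\<lambda>i. snd (s i))" for N s
    proof -
      obtain p q where "trivializes_at N ((\<lambda>i. fst (s i))(N := p)) ((\<lambda>i. snd (s i))(N := q))"
        using trivializes_at_extend[OF assms lower] by blast
      moreover have "(\<lambda>i. fst ((s(N := (p, q))) i)) = (\<lambda>i. fst (s i))(N := p)"
        and "(\<lambda>i. snd ((s(N := (p, q))) i)) = (\<lambda>i. snd (s i))(N := q)"
        by (simp_all add: fun_eq_iff)
      ultimately have "trivializes_at N (\<lambda>i. fst ((s(N := (p, q))) i)) (\<lambda>i. snd ((s(N := (p, q))) i))"
        by (simp only:)
      then show ?thesis by (rule exI)
    qed
  qed
  then show ?thesis by blast
qed

lemma equivalent_to_trivial: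
  assumes triv: "\<And>k. trivializes_at k P Q"
  shows "equiv_deformations sR sS MR MS F (\<lambda>i. if i = 0 then mR else (\<lambda>x y. 0))
    (\<lambda>i. if i = 0 then mS else (\<lambda>x y. 0)) (\<lambda>i. if i = 0 then f else (\<lambda>x. 0))"
proof -
  have P: "\<And>k. Vector_Spaces.linear sR sR (P k)" and Q: "\<And>k. Vector_Spaces.linear sS sS (Q k)"
    and P0: "\<And>x. P 0 x = x" and Q0: "\<And>x. Q 0 x = x"
    and hom_R: "\<And>n x y. bconv MR (\<lambda>k. P k x) (\<lambda>k. P k y) n = P n (MR 0 x y)"
    and hom_S: "\<And>n x y. bconv MS (\<lambda>k. Q k x) (\<lambda>k. Q k y) n = Q n (MS 0 x y)"
    and intertw: "\<And>n x. lconv F (\<lambda>k. P k x) n = Q n (F 0 x)"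
    using triv[of 0] triv
    by (simp_all add: trivializes_at_def hom_defect_def intertwining_defect_def del: constant_terms)
  have aP: "additive_seq P" and aQ: "additive_seq Q"
    by (rule additive_seq_if_linear, rule P, rule additive_seq_if_linear, rule Q)
  have "formal_iso sR (comp_inverse P)" "formal_iso sS (comp_inverse Q)"
    by (simp_all add: formal_iso_def id_def linear_comp_inverse P Q)
  moreover have "fps_inverse_of P (comp_inverse P)" "fps_inverse_of Q (comp_inverse Q)"
    by (rule fps_inverse_of_comp_inverse[OF aP P0],
        rule fps_inverse_of_comp_inverse[OF aQ Q0])
  moreover note conj_comp_inverse_bconv[OF aP P0 hom_R]
    conj_comp_inverse_bconv[OF aQ Q0 hom_S]
    conj_comp_inverse_lconv[OF aQ Q0 intertw]
  ultimately show ?thesis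
    unfolding equiv_deformations_def by (intro exI[of _ "comp_inverse P"] exI[of _ "comp_inverse Q"] exI[of _ P] exI[of _ Q]) auto
qed

end

theorem corollary4p2:
  fixes sR :: "'k::field \<Rightarrow> 'r::ab_group_add \<Rightarrow> 'r"
    and sS :: "'k \<Rightarrow> 's::ab_group_add \<Rightarrow> 's"
    and mR :: "'r \<Rightarrow> 'r \<Rightarrow> 'r" and mS :: "'s \<Rightarrow> 's \<Rightarrow> 's" and f :: "'r \<Rightarrow> 's"
  assumes "zinb_morphism sR mR sS mS f"
    and "H2_f_zero sR mR sS mS f"
  shows "rigid sR mR sS mS f"
  unfolding rigid_def
proof (intro allI impI)
  fix MR MS F
  assume "is_deformation sR mR sS mS f MR MS F"
  then interpret zinbiel_morphism_deformation sR mR sS mS f MR MS F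
    by (rule zinbiel_morphism_deformation.intro[OF assms(1)])
  obtain P Q where "\<forall>k. trivializes_at k P Q"
    using exists_trivializing[OF assms(2)] by blast
  then show "equiv_deformations sR sS MR MS F (\<lambda>i. if i = 0 then mR else (\<lambda>x y. 0))
      (\<lambda>i. if i = 0 then mS else (\<lambda>x y. 0)) (\<lambda>i. if i = 0 then f else (\<lambda>x. 0))"
    by (intro equivalent_to_trivial) blast
qed

end
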